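(* For $X_d=\otimes_{j=1}^d X_{1,j}$, the following are equivalent: (i) $\lim_{d\to\infty}n^{X_d}(\varepsilon)=\infty$ for every $\varepsilon\in(0,1)$; (ii) $\displaystyle\sum_{j=1}^\infty\sum_{k=2}^\infty\frac{\lambda^{X_{1,j}}_k}{\lambda^{X_{1,j}}_1}=\infty$.
   Context: For a centered Hilbert-space random element $Z$ with finite second moment, $\lambda^Z_1\ge\lambda^Z_2\ge\dots\ge 0$ denote the eigenvalues of its covariance operator $K^Z$ listed with multiplicity (padded with zeros if there are finitely many), $\Lambda^Z=\sum_k\lambda^Z_k$, $\bar\lambda^Z_k=\lambda^Z_k/\Lambda^Z$. Let $H_{1,j}$, $j\in\mathbb N$, be separable Hilbert spaces and $X_{1,j}$ centered $H_{1,j}$-valued random elements with $\mathbb E\|X_{1,j}\|^2<\infty$ and $\lambda^{X_{1,j}}_1>0$. $X_d=\otimes_{j=1}^dX_{1,j}$ means: $X_d$ is a centered random element of the Hilbert tensor product $H_d=\otimes_{j=1}^dH_{1,j}$ with covariance operator $K^{X_d}=\otimes_{j=1}^dK^{X_{1,j}}$; so the eigenvalues of $K^{X_d}$ are the products $\prod_{j=1}^d\lambda^{X_{1,j}}_{k_j}$, $(k_1,\dots,k_d)\in\mathbb N^d$, and $\Lambda^{X_d}=\prod_j\Lambda^{X_{1,j}}$. The average case approximation complexity is $n^{X_d}(\varepsilon)=\min\{n\in\mathbb N: e^{X_d}(n)\le\varepsilon e^{X_d}(0)\}$, where $e^{X_d}(0)=(\mathbb E\|X_d\|^2)^{1/2}$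 and $e^{X_d}(n)$ is the infimum of $(\mathbb E\|X_d-\sum_{m=1}^n l_m(X_d)\psi_m\|^2)^{1/2}$ over $\psi_m\in H_d$, $l_m\in H_d^*$; equivalently $n^{X_d}(\varepsilon)=\min\{n:\sum_{k>n}\bar\lambda^{X_d}_k\le\varepsilon^2\}$. *)

theory Defs
  imports Complex_Main "HOL-Library.FuncSet"
begin

text \<open>Eigenvalues of a coordinate covariance operator are given as a sequence
  indexed from 0: lam j k stands for the (k+1)-th eigenvalue of the covariance
  operator of the (j+1)-th coordinate element.\<close>

text \<open>Non-increasing rearrangement (with multiplicity, padded with zeros) of a
  nonnegative family f on an index set I; 0-based: entry k is the (k+1)-th largest.\<close>
definition decr_rearr :: "('a \<Rightarrow> real) \<Rightarrow> 'a set \<Rightarrow> nat \<Rightarrow> real" where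
  "decr_rearr f I k =
     Sup (insert 0 {t. \<exists>S\<subseteq>I. finite S \<and> card S = Suc k \<and> (\<forall>i\<in>S. t \<le> f i)})"

definition tensor_index :: "nat \<Rightarrow> (nat \<Rightarrow> nat) set" where
  "tensor_index d = PiE {..<d} (\<lambda>_. UNIV)"

definition tensor_eig :: "(nat \<Rightarrow> nat \<Rightarrow> real) \<Rightarrow> nat \<Rightarrow> (nat \<Rightarrow> nat) \<Rightarrow> real" where
  "tensor_eig lam d \<kappa> = (\<Prod>j<d. lam j (\<kappa> j))"

definition tensor_eigs :: "(nat \<Rightarrow> nat \<Rightarrow> real) \<Rightarrow> nat \<Rightarrow> nat \<Rightarrow> real" where
  "tensor_eigs lam d = decr_rearr (tensor_eig lam d) (tensor_index d)"

definition tensor_trace :: "(nat \<Rightarrow> nat \<Rightarrow> real) \<Rightarrow> nat \<Rightarrow> real" where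
  "tensor_trace lam d = (\<Prod>j<d. (\<Sum>k. lam j k))"

text \<open>Average case complexity n^{X_d}(eps) = min{n : sum_{k>n} bar-lambda_k \<le> eps^2}
  (1-based k > n corresponds to 0-based indices \<ge> n).\<close>
definition avg_complexity :: "(nat \<Rightarrow> nat \<Rightarrow> real) \<Rightarrow> nat \<Rightarrow> real \<Rightarrow> nat" where
  "avg_complexity lam d \<epsilon> =
     (LEAST n. (\<Sum>k. tensor_eigs lam d (k + n)) / tensor_trace lam d \<le> \<epsilon>\<^sup>2)"

end

theory Submission
  imports Defs "HOL-Analysis.Analysis"
begin

(*
  Write r_d for the ordered eigenvalues of K^{X_d}, T_d for their
  sum (the trace) and a_j = (sum_{k>=1} lam_j k) / lam_j 0 (rel_tail_mass).  The
  complexity n_d(eps) is the least n whose tail sum_{k>=n} r_d k is at most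
  eps^2 T_d (tail_index).

  (1) For ANY family of nonnegative sequences r_d summing to T_d > 0 whose first
      entry is the largest, n_d(eps) -> oo for all eps in (0,1) iff the share
      r_d 0 / T_d of the top entry tends to 0: the first n entries carry at most
      n r_d 0 of the mass, and conversely, whenever the share is >= c, a single
      entry already suffices for eps^2 = 1 - c/2.
  (2) For the tensor product, r_d 0 = prod_j lam_j 0 and T_d = prod_j sum_k lam_j k,
      so the share equals 1 / prod_{j<d} (1 + a_j).
  (3) For a_j >= 0, prod_{j<d} (1 + a_j) -> oo iff sum_j a_j = oo, because
      sum a_j <= prod (1 + a_j) <= exp (sum a_j).
*)

section \<open>Non-increasing rearrangements\<close>

lemma decr_rearr_candidates_bdd:
  fixes f :: "'a \<Rightarrow> real"
  assumes "\<And>i. i \<in> I \<Longrightarrow> f i \<le> B"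
  shows "bdd_above (insert 0 {t. \<exists>S\<subseteq>I. finite S \<and> card S = Suc k \<and> (\<forall>i\<in>S. t \<le> f i)})"
proof (rule bdd_aboveI[of _ "max 0 B"])
  fix x assume "x \<in> insert 0 {t. \<exists>S\<subseteq>I. finite S \<and> card S = Suc k \<and> (\<forall>i\<in>S. t \<le> f i)}"
  then show "x \<le> max 0 B"
  proof
    assume "x \<in> {t. \<exists>S\<subseteq>I. finite S \<and> card S = Suc k \<and> (\<forall>i\<in>S. t \<le> f i)}"
    then obtain S where S: "S \<subseteq> I" "card S = Suc k" "\<forall>i\<in>S. x \<le> f i" by blast
    then obtain i where "i \<in> S" by fastforce
    with S assms have "x \<le> f i" "f i \<le> B" by auto
    then show ?thesis by linarith
  qed auto
qed

lemma decr_rearr_le: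
  assumes "0 \<le> c"
    and "\<And>t S. S \<subseteq> I \<Longrightarrow> finite S \<Longrightarrow> card S = Suc k \<Longrightarrow> (\<forall>i\<in>S. t \<le> f i) \<Longrightarrow> t \<le> c"
  shows "decr_rearr f I k \<le> c"
  unfolding decr_rearr_def by (rule cSup_least) (use assms in auto)

lemma decr_rearr_ge:
  assumes "\<And>i. i \<in> I \<Longrightarrow> f i \<le> B"
    and "S \<subseteq> I" "finite S" "card S = Suc k" "\<forall>i\<in>S. t \<le> f i"
  shows "t \<le> decr_rearr f I k"
  unfolding decr_rearr_def
  by (rule cSup_upper[OF _ decr_rearr_candidates_bdd[OF assms(1)]]) (use assms in blast)

lemma decr_rearr_nonneg:
  assumes "\<And>i. i \<in> I \<Longrightarrow> f i \<le> B"
  shows "0 \<le> decr_rearr f I k"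
  unfolding decr_rearr_def by (rule cSup_upper[OF _ decr_rearr_candidates_bdd[OF assms]]) simp

lemma decr_rearr_remove:
  assumes B: "\<And>i. i \<in> I \<Longrightarrow> f i \<le> B"
  shows "decr_rearr f I (Suc k) \<le> decr_rearr f (I - {m}) k"
proof (rule decr_rearr_le[OF decr_rearr_nonneg[of "I - {m}" f B]])
  show "\<And>i. i \<in> I - {m} \<Longrightarrow> f i \<le> B" using B by auto
  fix t S assume S: "S \<subseteq> I" "finite S" "card S = Suc (Suc k)" "\<forall>i\<in>S. t \<le> f i"
  have "Suc k \<le> card (S - {m})" using S by (simp add: card_Diff_singleton_if)
  then obtain S' where "S' \<subseteq> S - {m}" "card S' = Suc k" "finite S'"
    using obtain_subset_with_card_n[of "Suc k" "S - {m}"] by auto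
  then show "t \<le> decr_rearr f (I - {m}) k"
    using S B by (intro decr_rearr_ge[of "I - {m}" f B, where S=S']) auto
qed

lemma decr_rearr_decseq:
  assumes B: "\<And>i. i \<in> I \<Longrightarrow> f i \<le> B"
  shows "decseq (decr_rearr f I)"
proof (rule decseq_SucI, rule decr_rearr_le[OF decr_rearr_nonneg[OF B]])
  fix k t S assume S: "S \<subseteq> I" "finite S" "card S = Suc (Suc k)" "\<forall>i\<in>S. t \<le> f i"
  then obtain S' where "S' \<subseteq> S" "card S' = Suc k" "finite S'"
    using obtain_subset_with_card_n[of "Suc k" S] by auto
  then show "t \<le> decr_rearr f I k"
    using S by (intro decr_rearr_ge[OF B, where S=S']) auto
qed

lemma decr_rearr_first:
  assumes "m \<in> I" "\<And>i. i \<in> I \<Longrightarrow> f i \<le> f m" "0 \<le> f m"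
  shows "decr_rearr f I 0 = f m"
proof (rule antisym)
  show "decr_rearr f I 0 \<le> f m"
  proof (rule decr_rearr_le[OF assms(3)])
    fix t S assume S: "S \<subseteq> I" "card S = Suc 0" "\<forall>i\<in>S. t \<le> f i"
    then obtain i where "S = {i}" by (auto simp: card_Suc_eq)
    then show "t \<le> f m" using S assms(2) by force
  qed
  show "f m \<le> decr_rearr f I 0"
    using assms by (intro decr_rearr_ge[of I f "f m", where S="{m}"]) auto
qed

text \<open>The first K entries carry at most the total mass, up to an error K e, for
  every e > 0: peel off an index that nearly attains the supremum and recurse.\<close>
lemma decr_rearr_partial_sum_le_eps:
  fixes f :: "'a \<Rightarrow> real"
  assumes "\<And>i. i \<in> I \<Longrightarrow> 0 \<le> f i" and "f summable_on I" and e: "0 < e"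
  shows "(\<Sum>k<K. decr_rearr f I k) \<le> infsum f I + real K * e"
  using assms(1,2)
proof (induction K arbitrary: I)
  case 0
  then show ?case by (simp add: infsum_nonneg)
next
  case (Suc K)
  show ?case
  proof (cases "I = {}")
    case True
    then show ?thesis using e by (simp add: decr_rearr_def)
  next
    case False
    have B: "f i \<le> infsum f I" if "i \<in> I" for i
      using finite_sum_le_has_sum[where f=f and S="infsum f I" and A=I and B="{i}"] Suc.prems that by auto
    have bdd: "bdd_above (f ` I)" using B by (intro bdd_aboveI2) auto
    obtain m where m: "m \<in> I" "Sup (f ` I) - e < f m"
      using less_cSupD[of "f ` I" "Sup (f ` I) - e"] False e by auto
    have first: "decr_rearr f I 0 \<le> f m + e"
    proof (rule decr_rearr_le)
      show "0 \<le> f m + e" using Suc.prems(1)[OF m(1)] e by linarith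
      fix t S assume S: "S \<subseteq> I" "card S = Suc 0" "\<forall>i\<in>S. t \<le> f i"
      then obtain i where "i \<in> I" "t \<le> f i" by (auto simp: card_Suc_eq)
      then have "t \<le> Sup (f ` I)" using bdd by (meson cSup_upper image_eqI order_trans)
      then show "t \<le> f m + e" using m by simp
    qed
    have rest: "f summable_on (I - {m})"
      using Suc.prems(2) by (rule summable_on_subset) auto
    have "(\<Sum>k<K. decr_rearr f I (Suc k)) \<le> (\<Sum>k<K. decr_rearr f (I - {m}) k)"
      by (intro sum_mono decr_rearr_remove[OF B]) auto
    also have "\<dots> \<le> infsum f (I - {m}) + real K * e"
      using Suc.IH[of "I - {m}"] Suc.prems rest by auto
    finally have tail: "(\<Sum>k<K. decr_rearr f I (Suc k)) \<le> infsum f (I - {m}) + real K * e" .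
    have "infsum f I = f m + infsum f (I - {m})"
      using infsum_insert[OF rest, of m] m by (simp add: insert_absorb)
    then show ?thesis
      unfolding sum.lessThan_Suc_shift using first tail by (simp add: algebra_simps)
  qed
qed

lemma decr_rearr_partial_sum_le:
  fixes f :: "'a \<Rightarrow> real"
  assumes "\<And>i. i \<in> I \<Longrightarrow> 0 \<le> f i" and "f summable_on I"
  shows "(\<Sum>k<K. decr_rearr f I k) \<le> infsum f I"
proof (rule field_le_epsilon)
  fix e :: real assume e: "0 < e"
  have "(\<Sum>k<K. decr_rearr f I k) \<le> infsum f I + real K * (e / (real K + 1))"
    using decr_rearr_partial_sum_le_eps[OF assms, of "e / (real K + 1)"] e by auto
  also have "real K * (e / (real K + 1)) \<le> e"
    using e by (simp add: field_simps)
  finally show "(\<Sum>k<K. decr_rearr f I k) \<le> infsum f I + e" by simp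
qed

lemma sum_le_decr_rearr_partial_sum:
  fixes f :: "'a \<Rightarrow> real"
  assumes B: "\<And>i. i \<in> I \<Longrightarrow> f i \<le> B" and "finite S" "S \<subseteq> I"
  shows "sum f S \<le> (\<Sum>k<card S. decr_rearr f I k)"
  using assms(2,3)
proof (induction "card S" arbitrary: S)
  case 0
  then show ?case by simp
next
  case (Suc n)
  then have "S \<noteq> {}" by auto
  then have "Min (f ` S) \<in> f ` S" using Suc.prems(1) by (intro Min_in) auto
  then obtain m where m: "m \<in> S" "f m = Min (f ` S)" by force
  have "card (S - {m}) = n" using Suc.hyps m by simp
  then have "sum f (S - {m}) \<le> (\<Sum>k<n. decr_rearr f I k)"
    using Suc.hyps(1)[of "S - {m}"] Suc.prems by auto
  moreover have "f m \<le> decr_rearr f I n"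
    using m Suc by (intro decr_rearr_ge[OF B, where S=S]) auto
  moreover have "sum f S = f m + sum f (S - {m})"
    using m Suc.prems by (simp add: sum.remove)
  ultimately show ?case using Suc.hyps(2)[symmetric] by simp
qed

lemma decr_rearr_sums:
  fixes f :: "'a \<Rightarrow> real"
  assumes nn: "\<And>i. i \<in> I \<Longrightarrow> 0 \<le> f i" and sm: "f summable_on I"
  shows "decr_rearr f I sums infsum f I"
proof -
  have B: "f i \<le> infsum f I" if "i \<in> I" for i
    using finite_sum_le_has_sum[where f=f and S="infsum f I" and A=I and B="{i}"] sm nn that by auto
  have nnr: "0 \<le> decr_rearr f I k" for k by (rule decr_rearr_nonneg[OF B])
  have s: "summable (decr_rearr f I)"
  proof (rule bounded_imp_summable[OF nnr])
    fix n
    show "sum (decr_rearr f I) {..n} \<le> infsum f I"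
      using decr_rearr_partial_sum_le[OF nn sm, of "Suc n"] by (simp add: lessThan_Suc_atMost)
  qed
  have "suminf (decr_rearr f I) \<le> infsum f I"
    by (rule suminf_le_const[OF s decr_rearr_partial_sum_le[OF nn sm]])
  moreover have "infsum f I \<le> suminf (decr_rearr f I)"
  proof (rule infsum_le_finite_sums[OF sm])
    fix F assume F: "finite F" "F \<subseteq> I"
    have "sum f F \<le> (\<Sum>k<card F. decr_rearr f I k)"
      by (rule sum_le_decr_rearr_partial_sum[OF B F])
    also have "\<dots> \<le> suminf (decr_rearr f I)" by (rule sum_le_suminf[OF s]) (simp_all add: nnr)
    finally show "sum f F \<le> suminf (decr_rearr f I)" .
  qed
  ultimately show ?thesis using summable_sums[OF s] by simp
qed

section \<open>The tail index of a summable sequence\<close>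

definition tail_index :: "(nat \<Rightarrow> real) \<Rightarrow> real \<Rightarrow> real \<Rightarrow> nat" where
  "tail_index r T \<epsilon> = (LEAST n. (\<Sum>k. r (k + n)) / T \<le> \<epsilon>\<^sup>2)"

lemma avg_complexity_eq_tail_index:
  "avg_complexity lam d \<epsilon> = tail_index (tensor_eigs lam d) (tensor_trace lam d) \<epsilon>"
  unfolding avg_complexity_def tail_index_def ..

lemma tail_sum_eq:
  fixes r :: "nat \<Rightarrow> real"
  assumes "r sums T"
  shows "(\<Sum>k. r (k + n)) = T - (\<Sum>k<n. r k)"
  using suminf_split_initial_segment[OF sums_summable[OF assms], of n] sums_unique[OF assms]
  by linarith

lemma tail_index_le_one:
  assumes sums: "r sums T" and "0 < T" and first: "(1 - \<epsilon>\<^sup>2) * T \<le> r 0"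
  shows "tail_index r T \<epsilon> \<le> 1"
  unfolding tail_index_def
proof (rule Least_le)
  have "(\<Sum>k. r (k + 1)) = T - r 0" using tail_sum_eq[OF sums, of 1] by simp
  with first \<open>0 < T\<close> show "(\<Sum>k. r (k + 1)) / T \<le> \<epsilon>\<^sup>2" by (simp add: field_simps)
qed

text \<open>If all entries are at most M, then the first n entries carry at most n M of
  the mass; so Z terms cannot reach the fraction 1 - eps^2 when Z M is smaller.\<close>
lemma tail_index_gt:
  assumes sums: "r sums T" and T: "0 < T" and "0 < \<epsilon>"
    and bound: "\<And>k. r k \<le> M" and "0 \<le> M" and small: "real Z * M < (1 - \<epsilon>\<^sup>2) * T"
  shows "Z < tail_index r T \<epsilon>"
proof -
  let ?P = "\<lambda>n. (\<Sum>k. r (k + n)) / T \<le> \<epsilon>\<^sup>2"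
  let ?m = "tail_index r T \<epsilon>"
  have "(1 - \<epsilon>\<^sup>2) * T < T" using \<open>0 < \<epsilon>\<close> T by simp
  moreover have "(\<lambda>n. \<Sum>k<n. r k) \<longlonglongrightarrow> T" using sums by (simp add: sums_def)
  ultimately have "eventually (\<lambda>n. (1 - \<epsilon>\<^sup>2) * T < (\<Sum>k<n. r k)) sequentially"
    by (simp add: order_tendstoD(1))
  then obtain n where "(1 - \<epsilon>\<^sup>2) * T < (\<Sum>k<n. r k)"
    by (auto simp: eventually_sequentially)
  then have "?P n" unfolding tail_sum_eq[OF sums] using T by (simp add: field_simps)
  then have "?P ?m" unfolding tail_index_def by (rule LeastI)
  then have "(1 - \<epsilon>\<^sup>2) * T \<le> (\<Sum>k<?m. r k)"
    unfolding tail_sum_eq[OF sums] using T by (simp add: field_simps)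
  also have "\<dots> \<le> real ?m * M" using sum_bounded_above[of "{..<?m}" r M] bound by simp
  finally have "real Z * M < real ?m * M" using small by linarith
  then have "real Z < real ?m" using \<open>0 \<le> M\<close> by (rule mult_right_less_imp_less)
  then show ?thesis by simp
qed

lemma tail_index_at_top_if_share_vanishes:
  assumes sums: "\<And>d. r d sums T d" and T: "\<And>d. 0 < T d"
    and top: "\<And>d k. r d k \<le> r d 0" and nn: "\<And>d. 0 \<le> r d 0"
    and share: "(\<lambda>d. r d 0 / T d) \<longlonglongrightarrow> 0" and "0 < \<epsilon>" "\<epsilon> < 1"
  shows "filterlim (\<lambda>d. tail_index (r d) (T d) \<epsilon>) at_top sequentially"
  unfolding filterlim_at_top
proof
  fix Z :: nat
  have "0 < (1 - \<epsilon>\<^sup>2) / (real Z + 1)"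
    using \<open>0 < \<epsilon>\<close> \<open>\<epsilon> < 1\<close> by (simp add: power_less_one_iff)
  with share have "eventually (\<lambda>d. r d 0 / T d < (1 - \<epsilon>\<^sup>2) / (real Z + 1)) sequentially"
    by (rule order_tendstoD(2))
  then show "eventually (\<lambda>d. Z \<le> tail_index (r d) (T d) \<epsilon>) sequentially"
  proof (rule eventually_mono)
    fix d assume "r d 0 / T d < (1 - \<epsilon>\<^sup>2) / (real Z + 1)"
    then have "(real Z + 1) * r d 0 < (1 - \<epsilon>\<^sup>2) * T d"
      using T[of d] by (simp add: field_simps)
    moreover have "real Z * r d 0 \<le> (real Z + 1) * r d 0" using nn[of d] by (simp add: mult_right_mono)
    ultimately have "real Z * r d 0 < (1 - \<epsilon>\<^sup>2) * T d" by linarith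
    then show "Z \<le> tail_index (r d) (T d) \<epsilon>"
      using tail_index_gt[OF sums T \<open>0 < \<epsilon>\<close> top nn] by (simp add: less_imp_le)
  qed
qed

text \<open>Conversely, if the tail index diverges for every eps, the share of the first
  entry vanishes: for eps^2 = 1 - c/2 the tail index is 1 whenever the share is at
  least c/2.\<close>
lemma share_vanishes_if_tail_index_at_top:
  assumes sums: "\<And>d. r d sums T d" and T: "\<And>d. 0 < T d" and nn: "\<And>d. 0 \<le> r d 0"
    and unbounded: "\<And>\<epsilon>. 0 < \<epsilon> \<Longrightarrow> \<epsilon> < 1 \<Longrightarrow>
                       filterlim (\<lambda>d. tail_index (r d) (T d) \<epsilon>) at_top sequentially"
  shows "(\<lambda>d. r d 0 / T d) \<longlonglongrightarrow> 0"
proof (rule order_tendstoI)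
  fix l :: real assume "l < 0"
  then show "eventually (\<lambda>d. l < r d 0 / T d) sequentially"
    using nn T by (simp add: less_le_trans[OF _ divide_nonneg_pos])
next
  fix u :: real assume "0 < u"
  define c where "c = min u 1"
  define \<epsilon> where "\<epsilon> = sqrt (1 - c / 2)"
  have c: "0 < c" "c \<le> 1" "c \<le> u" using \<open>0 < u\<close> by (auto simp: c_def)
  have \<epsilon>: "0 < \<epsilon>" "\<epsilon> < 1" "\<epsilon>\<^sup>2 = 1 - c / 2" using c by (auto simp: \<epsilon>_def)
  have "eventually (\<lambda>d. 2 \<le> tail_index (r d) (T d) \<epsilon>) sequentially"
    using unbounded[OF \<epsilon>(1,2)] by (simp add: filterlim_at_top)
  then show "eventually (\<lambda>d. r d 0 / T d < u) sequentially"
  proof (rule eventually_mono)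
    fix d assume "2 \<le> tail_index (r d) (T d) \<epsilon>"
    then have "\<not> (1 - \<epsilon>\<^sup>2) * T d \<le> r d 0"
      using tail_index_le_one[OF sums T] by fastforce
    then have "r d 0 / T d < c / 2" using T[of d] \<epsilon>(3) by (simp add: field_simps)
    then show "r d 0 / T d < u" using c by linarith
  qed
qed

lemma tail_index_at_top_iff_share_vanishes:
  assumes sums: "\<And>d. r d sums T d" and T: "\<And>d. 0 < T d"
    and top: "\<And>d k. r d k \<le> r d 0" and nn: "\<And>d. 0 \<le> r d 0"
  shows "(\<forall>\<epsilon>::real. 0 < \<epsilon> \<and> \<epsilon> < 1 \<longrightarrow>
            filterlim (\<lambda>d. tail_index (r d) (T d) \<epsilon>) at_top sequentially)
     \<longleftrightarrow> (\<lambda>d. r d 0 / T d) \<longlonglongrightarrow> 0"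
proof (intro iffI allI impI)
  assume "\<forall>\<epsilon>::real. 0 < \<epsilon> \<and> \<epsilon> < 1 \<longrightarrow> filterlim (\<lambda>d. tail_index (r d) (T d) \<epsilon>) at_top sequentially"
  then show "(\<lambda>d. r d 0 / T d) \<longlonglongrightarrow> 0"
    by (intro share_vanishes_if_tail_index_at_top[of r T, OF sums T nn]) auto
next
  fix \<epsilon> :: real assume "(\<lambda>d. r d 0 / T d) \<longlonglongrightarrow> 0" and "0 < \<epsilon> \<and> \<epsilon> < 1"
  then show "filterlim (\<lambda>d. tail_index (r d) (T d) \<epsilon>) at_top sequentially"
    using tail_index_at_top_if_share_vanishes[of r T, OF sums T top nn] by blast
qed

section \<open>Products of the form prod (1 + a j)\<close>

lemma partial_sums_at_top_if_not_summable:
  fixes a :: "nat \<Rightarrow> real"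
  assumes nn: "\<And>j. 0 \<le> a j" and "\<not> summable a"
  shows "filterlim (\<lambda>d. \<Sum>j<d. a j) at_top sequentially"
  unfolding filterlim_at_top
proof
  fix Z :: real
  obtain n where n: "Z < (\<Sum>j\<le>n. a j)"
    using bounded_imp_summable[OF nn, where B=Z] \<open>\<not> summable a\<close> by (meson not_le)
  have "Z \<le> (\<Sum>j<d. a j)" if "Suc n \<le> d" for d
  proof -
    have "(\<Sum>j\<le>n. a j) \<le> (\<Sum>j<d. a j)" using that nn by (intro sum_mono2) auto
    with n show ?thesis by linarith
  qed
  then show "eventually (\<lambda>d. Z \<le> (\<Sum>j<d. a j)) sequentially"
    by (auto simp: eventually_sequentially)
qed

text \<open>For nonnegative a, the partial products of (1 + a j) diverge iff the series
  of the a j diverges, by the bounds 1 + sum a <= prod (1 + a) <= exp (sum a).\<close>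
lemma prod_one_plus_at_top_iff:
  fixes a :: "nat \<Rightarrow> real"
  assumes nn: "\<And>j. 0 \<le> a j"
  shows "filterlim (\<lambda>d. \<Prod>j<d. 1 + a j) at_top sequentially \<longleftrightarrow> \<not> summable a"
proof
  assume at_top: "filterlim (\<lambda>d. \<Prod>j<d. 1 + a j) at_top sequentially"
  show "\<not> summable a"
  proof
    assume "summable a"
    have bound: "(\<Prod>j<d. 1 + a j) \<le> exp (suminf a)" for d
    proof -
      have "(\<Prod>j<d. 1 + a j) \<le> exp (\<Sum>j<d. a j)" by (rule prod_le_exp_sum) (rule nn)
      also have "\<dots> \<le> exp (suminf a)" using sum_le_suminf[OF \<open>summable a\<close>] nn by simp
      finally show ?thesis .
    qed
    obtain N where "exp (suminf a) + 1 \<le> (\<Prod>j<N. 1 + a j)"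
      using at_top by (auto simp: filterlim_at_top eventually_sequentially)
    with bound[of N] show False by linarith
  qed
next
  assume "\<not> summable a"
  then have "filterlim (\<lambda>d. \<Sum>j<d. a j) at_top sequentially"
    by (rule partial_sums_at_top_if_not_summable[OF nn])
  moreover have "(\<Sum>j<d. a j) \<le> (\<Prod>j<d. 1 + a j)" for d by (rule sum_le_prod) (rule nn)
  ultimately show "filterlim (\<lambda>d. \<Prod>j<d. 1 + a j) at_top sequentially"
    by (auto intro: filterlim_at_top_mono)
qed

lemma inverse_prod_one_plus_tendsto_0_iff:
  fixes a :: "nat \<Rightarrow> real"
  assumes nn: "\<And>j. 0 \<le> a j"
  shows "(\<lambda>d. inverse (\<Prod>j<d. 1 + a j)) \<longlonglongrightarrow> 0 \<longleftrightarrow> \<not> summable a"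
proof -
  have "0 < (\<Prod>j<d. 1 + a j)" for d using nn by (intro prod_pos) (simp add: add_pos_nonneg)
  then have "filterlim (\<lambda>d. \<Prod>j<d. 1 + a j) at_top sequentially
               \<longleftrightarrow> (\<lambda>d. inverse (\<Prod>j<d. 1 + a j)) \<longlonglongrightarrow> 0"
    using filterlim_at_top_iff_inverse_0[of "\<lambda>d. \<Prod>j<d. 1 + a j" sequentially] by (simp add: o_def)
  with prod_one_plus_at_top_iff[OF nn] show ?thesis by simp
qed

section \<open>The spectrum of the tensor product\<close>

lemma suminf_coordinate_pos:
  fixes lam :: "nat \<Rightarrow> nat \<Rightarrow> real"
  assumes nonneg: "\<And>j k. 0 \<le> lam j k" and summ: "\<And>j. summable (lam j)"
    and pos: "\<And>j. 0 < lam j 0"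
  shows "0 < (\<Sum>k. lam j k)"
  using sum_le_suminf[OF summ, of "{0}" j] nonneg pos[of j] by auto

lemma tensor_trace_pos:
  fixes lam :: "nat \<Rightarrow> nat \<Rightarrow> real"
  assumes nonneg: "\<And>j k. 0 \<le> lam j k" and summ: "\<And>j. summable (lam j)"
    and pos: "\<And>j. 0 < lam j 0"
  shows "0 < tensor_trace lam d"
  unfolding tensor_trace_def by (intro prod_pos suminf_coordinate_pos[OF nonneg summ pos])

text \<open>The trace of the tensor product is the product of the traces: the eigenvalue
  family is summable over all multi-indices, with total mass tensor_trace.  (Its
  infinite sum is positive, and a non-summable family would have sum 0.)\<close>
lemma tensor_eig_has_sum:
  fixes lam :: "nat \<Rightarrow> nat \<Rightarrow> real"
  assumes nonneg: "\<And>j k. 0 \<le> lam j k" and summ: "\<And>j. summable (lam j)"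
    and pos: "\<And>j. 0 < lam j 0"
  shows "tensor_eig lam d summable_on tensor_index d"
    and "infsum (tensor_eig lam d) (tensor_index d) = tensor_trace lam d"
proof -
  have has_sum: "(lam j has_sum (\<Sum>k. lam j k)) UNIV" for j
    by (rule sums_nonneg_imp_has_sum[OF summable_sums[OF summ] nonneg])
  have "(\<lambda>k. norm (lam j k)) summable_on UNIV" for j
    using has_sum[of j] nonneg by (auto simp: summable_on_def)
  then have "infsum (tensor_eig lam d) (tensor_index d) = (\<Prod>j<d. infsum (lam j) UNIV)"
    unfolding tensor_eig_def tensor_index_def by (intro infsum_prod_PiE_abs) auto
  also have "\<dots> = tensor_trace lam d"
    unfolding tensor_trace_def using infsumI[OF has_sum] by simp
  finally show infsum: "infsum (tensor_eig lam d) (tensor_index d) = tensor_trace lam d" .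
  show "tensor_eig lam d summable_on tensor_index d"
    using infsum tensor_trace_pos[of lam, OF nonneg summ pos, of d] infsum_not_exists
    by (metis less_irrefl)
qed

lemma tensor_eigs_sums:
  fixes lam :: "nat \<Rightarrow> nat \<Rightarrow> real"
  assumes nonneg: "\<And>j k. 0 \<le> lam j k" and summ: "\<And>j. summable (lam j)"
    and pos: "\<And>j. 0 < lam j 0"
  shows "tensor_eigs lam d sums tensor_trace lam d"
  unfolding tensor_eigs_def tensor_eig_has_sum(2)[OF nonneg summ pos, symmetric]
  by (rule decr_rearr_sums[OF _ tensor_eig_has_sum(1)[OF nonneg summ pos]])
     (simp add: tensor_eig_def prod_nonneg nonneg)

lemma tensor_eig_le_top:
  fixes lam :: "nat \<Rightarrow> nat \<Rightarrow> real"
  assumes nonneg: "\<And>j k. 0 \<le> lam j k" and nonincr: "\<And>j k. lam j (Suc k) \<le> lam j k"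
  shows "tensor_eig lam d \<kappa> \<le> (\<Prod>j<d. lam j 0)"
proof -
  have "lam j k \<le> lam j 0" for j k
    using decseqD[OF decseq_SucI[of "lam j", OF nonincr]] by simp
  then show ?thesis unfolding tensor_eig_def by (intro prod_mono) (simp add: nonneg)
qed

lemma tensor_eigs_first:
  fixes lam :: "nat \<Rightarrow> nat \<Rightarrow> real"
  assumes nonneg: "\<And>j k. 0 \<le> lam j k" and nonincr: "\<And>j k. lam j (Suc k) \<le> lam j k"
  shows "tensor_eigs lam d 0 = (\<Prod>j<d. lam j 0)"
proof -
  let ?zero = "restrict (\<lambda>_. 0) {..<d}"
  have "tensor_eig lam d ?zero = (\<Prod>j<d. lam j 0)" by (simp add: tensor_eig_def)
  moreover have "decr_rearr (tensor_eig lam d) (tensor_index d) 0 = tensor_eig lam d ?zero"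
    by (rule decr_rearr_first)
       (auto simp: tensor_index_def tensor_eig_le_top[of lam, OF nonneg nonincr] prod_nonneg nonneg
             tensor_eig_def[of lam d ?zero])
  ultimately show ?thesis unfolding tensor_eigs_def by simp
qed

lemma tensor_eigs_le_first:
  fixes lam :: "nat \<Rightarrow> nat \<Rightarrow> real"
  assumes nonneg: "\<And>j k. 0 \<le> lam j k" and nonincr: "\<And>j k. lam j (Suc k) \<le> lam j k"
  shows "tensor_eigs lam d k \<le> tensor_eigs lam d 0"
  unfolding tensor_eigs_def
  by (rule decseqD[OF decr_rearr_decseq[OF tensor_eig_le_top[of lam, OF nonneg nonincr]]]) simp

definition rel_tail_mass :: "(nat \<Rightarrow> nat \<Rightarrow> real) \<Rightarrow> nat \<Rightarrow> real" where
  "rel_tail_mass lam j = (\<Sum>k. lam j (Suc k)) / lam j 0"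

lemma rel_tail_mass_nonneg:
  fixes lam :: "nat \<Rightarrow> nat \<Rightarrow> real"
  assumes nonneg: "\<And>j k. 0 \<le> lam j k" and summ: "\<And>j. summable (lam j)"
    and pos: "\<And>j. 0 < lam j 0"
  shows "0 \<le> rel_tail_mass lam j"
  unfolding rel_tail_mass_def using pos[of j] summ[of j] nonneg
  by (intro divide_nonneg_pos suminf_nonneg) (auto simp: summable_Suc_iff)

lemma tensor_trace_factor:
  fixes lam :: "nat \<Rightarrow> nat \<Rightarrow> real"
  assumes summ: "\<And>j. summable (lam j)" and pos: "\<And>j. 0 < lam j 0"
  shows "tensor_trace lam d = (\<Prod>j<d. lam j 0) * (\<Prod>j<d. 1 + rel_tail_mass lam j)"
proof -
  have "(\<Sum>k. lam j k) = lam j 0 * (1 + rel_tail_mass lam j)" for j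
    using suminf_split_head[OF summ[of j]] pos[of j] by (simp add: rel_tail_mass_def field_simps)
  then show ?thesis unfolding tensor_trace_def by (simp add: prod.distrib)
qed

lemma tensor_top_share:
  fixes lam :: "nat \<Rightarrow> nat \<Rightarrow> real"
  assumes nonneg: "\<And>j k. 0 \<le> lam j k" and nonincr: "\<And>j k. lam j (Suc k) \<le> lam j k"
    and summ: "\<And>j. summable (lam j)" and pos: "\<And>j. 0 < lam j 0"
  shows "tensor_eigs lam d 0 / tensor_trace lam d = inverse (\<Prod>j<d. 1 + rel_tail_mass lam j)"
proof -
  have "(\<Prod>j<d. lam j 0) \<noteq> 0" using pos by (metis less_irrefl prod_pos)
  then show ?thesis
    unfolding tensor_eigs_first[of lam, OF nonneg nonincr] tensor_trace_factor[of lam, OF summ pos]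
    by (simp add: inverse_eq_divide)
qed

theorem proposition4:
  fixes lam :: "nat \<Rightarrow> nat \<Rightarrow> real"
  assumes nonneg: "\<And>j k. 0 \<le> lam j k"
    and nonincr: "\<And>j k. lam j (Suc k) \<le> lam j k"
    and summ: "\<And>j. summable (lam j)"
    and pos: "\<And>j. 0 < lam j 0"
  shows "(\<forall>\<epsilon>::real. 0 < \<epsilon> \<and> \<epsilon> < 1 \<longrightarrow>
            filterlim (\<lambda>d. avg_complexity lam d \<epsilon>) at_top sequentially)
     \<longleftrightarrow> \<not> summable (\<lambda>j. (\<Sum>k. lam j (Suc k)) / lam j 0)"
proof -
  have "(\<forall>\<epsilon>::real. 0 < \<epsilon> \<and> \<epsilon> < 1 \<longrightarrow>
            filterlim (\<lambda>d. avg_complexity lam d \<epsilon>) at_top sequentially)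
     \<longleftrightarrow> (\<lambda>d. tensor_eigs lam d 0 / tensor_trace lam d) \<longlonglongrightarrow> 0"
    unfolding avg_complexity_eq_tail_index
  proof (rule tail_index_at_top_iff_share_vanishes)
    show "tensor_eigs lam d sums tensor_trace lam d" for d
      by (rule tensor_eigs_sums[of lam, OF nonneg summ pos])
    show "0 < tensor_trace lam d" for d by (rule tensor_trace_pos[of lam, OF nonneg summ pos])
    show "tensor_eigs lam d k \<le> tensor_eigs lam d 0" for d k
      by (rule tensor_eigs_le_first[of lam, OF nonneg nonincr])
    show "0 \<le> tensor_eigs lam d 0" for d
      by (simp add: tensor_eigs_first[of lam, OF nonneg nonincr] prod_nonneg nonneg)
  qed
  also have "\<dots> \<longleftrightarrow> (\<lambda>d. inverse (\<Prod>j<d. 1 + rel_tail_mass lam j)) \<longlonglongrightarrow> 0"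
    by (simp add: tensor_top_share[of lam, OF nonneg nonincr summ pos])
  also have "\<dots> \<longleftrightarrow> \<not> summable (rel_tail_mass lam)"
    by (rule inverse_prod_one_plus_tendsto_0_iff[OF rel_tail_mass_nonneg[of lam, OF nonneg summ pos]])
  finally show ?thesis unfolding rel_tail_mass_def .
qed

end
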